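(* Let $X,Y$ be non-commuting indeterminates and $C=XYX^{-1}Y^{-1}$. Let $(R_n)_{n\in\mathbb Z}$ satisfy $$R_{2n}CR_{2n-2}=1+R_{2n-1},\qquad R_{2n+1}CR_{2n-1}=1+R_{2n}^4\qquad(n\in\mathbb Z),$$ with $R_1=YXY^{-1}$ and $R_2=Y$, and set $u_n=R_{2n}$, so that $u_1=Y$. Define $$y_1'=\big(Y^3+(1+X)Y^{-1}\big)X^{-1}Y^{-1},$$ $$y_2'=\big(Y+(1+X)Y^{-2}(1+X)Y^{-1}\big)X^{-1}Y^{-1},$$ $$y_3'=(1+X)Y^{-2}.$$ Then, as formal power series in a central variable $t$, $$\sum_{n\ge0}t^nu_{n+1}=\Big(1-ty_1'-t^2(1-ty_3')^{-1}y_2'\Big)^{-1}u_1.$$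
   Context: Work in the free skew field (non-commutative rational functions) over $\mathbb C$ generated by $X,Y$. The variable $t$ is a formal variable commuting with everything, and inverses of $1-(\text{terms of positive }t\text{-degree})$ are expanded as geometric series. *)

theory Defs
  imports "HOL-Computational_Algebra.Formal_Power_Series"
begin

text \<open>Noncommutative polynomials over C in the letters X (encoded False) and Y
(encoded True): finitely supported functions from words to complex.\<close>

type_synonym ncpoly = "bool list \<Rightarrow> complex"

definition is_ncpoly :: "ncpoly \<Rightarrow> bool" where
  "is_ncpoly p \<longleftrightarrow> finite {w. p w \<noteq> 0}"

definition ncpoly_mult :: "ncpoly \<Rightarrow> ncpoly \<Rightarrow> ncpoly" where
  "ncpoly_mult p q w = (\<Sum>k\<le>length w. p (take k w) * q (drop k w))"

definition ncpoly_add :: "ncpoly \<Rightarrow> ncpoly \<Rightarrow> ncpoly" where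
  "ncpoly_add p q w = p w + q w"

definition eval_word :: "'a::ring_1 \<Rightarrow> 'a \<Rightarrow> bool list \<Rightarrow> 'a" where
  "eval_word X Y w = foldr (\<lambda>b acc. (if b then Y else X) * acc) w 1"

definition eval_ncpoly ::
  "(complex \<Rightarrow> 'a::ring_1) \<Rightarrow> 'a \<Rightarrow> 'a \<Rightarrow> ncpoly \<Rightarrow> 'a" where
  "eval_ncpoly iota X Y p = (\<Sum>w\<in>{w. p w \<noteq> 0}. iota (p w) * eval_word X Y w)"

text \<open>Square n x n matrices over the free algebra: 'nat \<Rightarrow> nat \<Rightarrow> ncpoly',
only entries with indices < n matter.\<close>

definition full_matrix :: "nat \<Rightarrow> (nat \<Rightarrow> nat \<Rightarrow> ncpoly) \<Rightarrow> bool" where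
  "full_matrix n M \<longleftrightarrow>
     \<not> (\<exists>r < n. \<exists>A B. (\<forall>i<n. \<forall>k<r. is_ncpoly (A i k)) \<and> (\<forall>k<r. \<forall>j<n. is_ncpoly (B k j)) \<and>
          (\<forall>i<n. \<forall>j<n. M i j = (\<lambda>w. \<Sum>k<r. ncpoly_mult (A i k) (B k j) w)))"

definition invertible_over :: "nat \<Rightarrow> (nat \<Rightarrow> nat \<Rightarrow> 'a::ring_1) \<Rightarrow> bool" where
  "invertible_over n M \<longleftrightarrow> (\<exists>N.
      (\<forall>i<n. \<forall>j<n. (\<Sum>k<n. M i k * N k j) = (if i = j then 1 else 0)) \<and>
      (\<forall>i<n. \<forall>j<n. (\<Sum>k<n. N i k * M k j) = (if i = j then 1 else 0)))"

inductive_set generated_divring ::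
  "(complex \<Rightarrow> 'a::division_ring) \<Rightarrow> 'a \<Rightarrow> 'a \<Rightarrow> 'a set"
  for iota X Y where
  gen_const: "iota c \<in> generated_divring iota X Y"
| gen_X: "X \<in> generated_divring iota X Y"
| gen_Y: "Y \<in> generated_divring iota X Y"
| gen_add: "a \<in> generated_divring iota X Y \<Longrightarrow> b \<in> generated_divring iota X Y \<Longrightarrow>
            a + b \<in> generated_divring iota X Y"
| gen_uminus: "a \<in> generated_divring iota X Y \<Longrightarrow> - a \<in> generated_divring iota X Y"
| gen_mult: "a \<in> generated_divring iota X Y \<Longrightarrow> b \<in> generated_divring iota X Y \<Longrightarrow>
            a * b \<in> generated_divring iota X Y"
| gen_inverse: "a \<in> generated_divring iota X Y \<Longrightarrow> inverse a \<in> generated_divring iota X Y"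

text \<open>Cohn's characterisation: K (the type 'a) with central embedding iota of C and
elements X, Y is the free skew field on X, Y over C iff K is generated as a
division ring by C, X, Y (so it is a field of fractions of C<X,Y>) and every full
matrix over C<X,Y> becomes invertible in K (the universal / fully inverting field
of fractions of the fir C<X,Y>).\<close>

definition free_skew_field :: "(complex \<Rightarrow> 'a::division_ring) \<Rightarrow> 'a \<Rightarrow> 'a \<Rightarrow> bool" where
  "free_skew_field iota X Y \<longleftrightarrow>
     iota 0 = 0 \<and> iota 1 = 1 \<and>
     (\<forall>a b. iota (a + b) = iota a + iota b) \<and> (\<forall>a b. iota (a * b) = iota a * iota b) \<and>
     (\<forall>c z. iota c * z = z * iota c) \<and>
     generated_divring iota X Y = UNIV \<and>
     (\<forall>n M. (\<forall>i<n. \<forall>j<n. is_ncpoly (M i j)) \<longrightarrow> full_matrix n M \<longrightarrow>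
        invertible_over n (\<lambda>i j. eval_ncpoly iota X Y (M i j)))"

end

theory Submission
  imports Defs
begin

text \<open>For \<open>j \<ge> 1\<close> the exchange relation \<open>R(j+1) C R(j) = R(j) R(j+1)\<close> holds: it is true for
\<open>j = 1\<close>, and it propagates because \<open>R(j+2) C R(j)\<close> is \<open>1 + R(j+1)\<close> or \<open>1 + R(j+1)\<^sup>4\<close>.  It lets
one solve the recursion for \<open>R(2k+1), R(2k+2)\<close> in terms of \<open>u = R(2k)\<close> and
\<open>x = u\<inverse> R(2k-1) u\<close>, and the resulting rational map \<open>(x, u) \<mapsto> (x', u')\<close> preserves
\<open>G(x, u) = (1 + x + u\<^sup>4) u\<inverse> x\<inverse> u\<inverse> + (1 + x) u\<^sup>-\<^sup>2\<close>, which equals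
\<open>(R(2k+2) + C R(2k-2)) u\<inverse>\<close>.  As \<open>(x, u) = (X, Y)\<close> at \<open>k = 1\<close>, the \<open>u(n) = R(2n)\<close> satisfy the
constant-coefficient recurrence \<open>u(n+1) = G(X, Y) u(n) - C u(n-1)\<close>, and the continued fraction is its
generating function because \<open>y\<^sub>1' + y\<^sub>3' = G(X, Y)\<close> and \<open>y\<^sub>2' - y\<^sub>3' y\<^sub>1' = -C\<close>.  Freeness is needed
only to see that no \<open>R(j)\<close> vanishes: a zero would force \<open>C\<close> to be a scalar.\<close>

unbundle fps_syntax

lemma mult_inverse_cancel_left: "(x::'a::division_ring) \<noteq> 0 \<Longrightarrow> x * (inverse x * y) = y"
  by (simp add: mult.assoc[symmetric])

lemma inverse_mult_cancel_left: "(x::'a::division_ring) \<noteq> 0 \<Longrightarrow> inverse x * (x * y) = y"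
  by (simp add: mult.assoc[symmetric])

subsection \<open>Generating function of a second order recurrence\<close>

lemma Abs_fps_second_order_recurrence:
  fixes y1 y2 y3 :: "'a::division_ring" and v :: "nat \<Rightarrow> 'a"
  assumes v1: "v 1 = y1 * v 0"
    and vrec: "\<And>n. v (n + 2) = (y1 + y3) * v (n + 1) + (y2 - y3 * y1) * v n"
  shows "Abs_fps v = inverse (1 - fps_X * fps_const y1
                       - fps_X ^ 2 * inverse (1 - fps_X * fps_const y3) * fps_const y2)
            * fps_const (v 0)"
proof -
  define E where "E = 1 - fps_X * fps_const y3"
  define D where "D = 1 - fps_X * fps_const y1 - fps_X ^ 2 * inverse E * fps_const y2"
  have E0: "E $ 0 \<noteq> 0" unfolding E_def by simp
  have D0: "D $ 0 \<noteq> 0" unfolding D_def by (simp add: power2_eq_square mult.assoc)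
  have comm: "\<And>f::'a fps. fps_X * f = f * fps_X" by (rule fps_mult_fps_X_commute)
  have EX2: "E * (fps_X ^ 2 * inverse E * fps_const y2) = fps_X ^ 2 * fps_const y2"
  proof -
    have "E * fps_X ^ 2 = fps_X ^ 2 * E" by (metis comm power2_eq_square mult.assoc)
    hence "E * (fps_X ^ 2 * inverse E * fps_const y2) = fps_X ^ 2 * (E * inverse E) * fps_const y2"
      by (simp add: mult.assoc[symmetric])
    thus ?thesis using inverse_mult_eq_1'[OF E0] by simp
  qed
  have EX1: "E * (fps_X * fps_const y1) = fps_X * fps_const y1 - fps_X * (fps_X * fps_const (y3 * y1))"
  proof -
    have "fps_const y3 * (fps_X * fps_const y1) = fps_X * fps_const (y3 * y1)"
      by (metis comm fps_const_mult mult.assoc)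
    thus ?thesis unfolding E_def by (simp add: algebra_simps)
  qed
  \<comment> \<open>Clearing the inner denominator turns \<open>D\<close> into the characteristic polynomial of the recurrence.\<close>
  have ED: "E * D = 1 - fps_X * fps_const (y1 + y3) + fps_X * (fps_X * fps_const (y3 * y1 - y2))"
  proof -
    have "E * D = E - E * (fps_X * fps_const y1) - E * (fps_X ^ 2 * inverse E * fps_const y2)"
      unfolding D_def by (simp add: algebra_simps)
    also have "\<dots> = 1 - fps_X * fps_const (y1 + y3) + fps_X * (fps_X * fps_const (y3 * y1 - y2))"
      unfolding EX1 EX2 unfolding E_def
      by (simp add: algebra_simps power2_eq_square fps_const_add[symmetric] fps_const_sub[symmetric]
           del: fps_const_add fps_const_sub)
    finally show ?thesis .
  qed
  have "(E * D) * Abs_fps v = E * fps_const (v 0)"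
    unfolding ED
  proof (rule fps_ext)
    fix n
    show "((1 - fps_X * fps_const (y1 + y3) + fps_X * (fps_X * fps_const (y3 * y1 - y2))) * Abs_fps v) $ n
          = (E * fps_const (v 0)) $ n"
    proof (cases n)
      case 0 thus ?thesis unfolding E_def by (simp add: algebra_simps)
    next
      case (Suc m)
      show ?thesis
      proof (cases m)
        case 0 thus ?thesis using Suc v1 unfolding E_def by (simp add: algebra_simps)
      next
        case (Suc k)
        thus ?thesis using \<open>n = Suc m\<close> vrec[of k] unfolding E_def by (simp add: algebra_simps)
      qed
    qed
  qed
  hence "inverse E * (E * (D * Abs_fps v)) = inverse E * (E * fps_const (v 0))"
    by (simp add: mult.assoc)
  hence DU: "D * Abs_fps v = fps_const (v 0)"
    using inverse_mult_eq_1[OF E0] by (simp add: mult.assoc[symmetric])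
  have "Abs_fps v = inverse D * (D * Abs_fps v)"
    using inverse_mult_eq_1[OF D0] by (simp add: mult.assoc[symmetric])
  also have "\<dots> = inverse D * fps_const (v 0)" by (simp only: DU)
  finally show ?thesis unfolding D_def E_def .
qed

locale central_scalars =
  fixes iota :: "complex \<Rightarrow> 'a::division_ring"
  assumes iota_1: "iota 1 = 1"
    and iota_add: "\<And>a b. iota (a + b) = iota a + iota b"
    and iota_mult: "\<And>a b. iota (a * b) = iota a * iota b"
    and iota_central: "\<And>c z. iota c * z = z * iota c"
begin

lemma iota_0: "iota 0 = 0"
  using iota_add[of 0 0] by simp

lemma iota_minus: "iota (- a) = - iota a"
  using iota_add[of "- a" a] iota_0 by (simp add: eq_neg_iff_add_eq_0)

lemma iota_inverse: "iota (inverse a) = inverse (iota a)"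
proof (cases "a = 0")
  case True thus ?thesis by (simp add: iota_0)
next
  case False
  hence "iota a * iota (inverse a) = 1" by (simp flip: iota_mult add: iota_1)
  thus ?thesis by (rule inverse_unique[symmetric])
qed

lemma scalar_if_square_scalar:
  assumes "x ^ 2 = iota c"
  shows "\<exists>z. x = iota z"
proof -
  define z where "z = csqrt c"
  have "(x - iota z) * (x + iota z) = x ^ 2 - iota z * iota z"
    using iota_central[of z x] by (simp add: algebra_simps power2_eq_square)
  also have "\<dots> = 0"
    using assms iota_mult[of z z] power2_csqrt[of c] by (simp add: z_def power2_eq_square)
  finally have "x = iota z \<or> x = iota (- z)"
    by (auto simp: iota_minus eq_neg_iff_add_eq_0)
  thus ?thesis by blast
qed

lemma scalar_if_power4_eq_minus_1:
  assumes "x ^ 4 = -1"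
  shows "\<exists>z. x = iota z"
proof -
  have "(x ^ 2) ^ 2 = iota (-1)"
    using assms by (simp add: iota_minus iota_1 flip: power_mult)
  then obtain z where "x ^ 2 = iota z" using scalar_if_square_scalar by blast
  thus ?thesis by (rule scalar_if_square_scalar)
qed

end

lemma free_skew_field_central_scalars:
  assumes "free_skew_field iota X Y"
  shows "central_scalars iota"
proof -
  have "iota 1 = 1 \<and> (\<forall>a b. iota (a + b) = iota a + iota b) \<and> (\<forall>a b. iota (a * b) = iota a * iota b)
      \<and> (\<forall>c z. iota c * z = z * iota c)"
    using assms unfolding free_skew_field_def by (elim conjE) (intro conjI; assumption)
  thus ?thesis by unfold_locales blast+
qed

lemma eval_ncpoly_on_superset:
  assumes "iota 0 = 0" and "finite S" and "{w. p w \<noteq> 0} \<subseteq> S"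
  shows "eval_ncpoly iota X Y p = (\<Sum>w\<in>S. iota (p w) * eval_word X Y w)"
  unfolding eval_ncpoly_def
  by (rule sum.mono_neutral_left[OF assms(2,3)]) (auto simp: assms(1))

lemma full_matrix_1: "p \<noteq> (\<lambda>w. 0) \<Longrightarrow> full_matrix 1 (\<lambda>i j. p)"
  unfolding full_matrix_def by (auto simp del: One_nat_def)

lemma eval_ncpoly_nonzero:
  fixes iota :: "complex \<Rightarrow> 'a::division_ring"
  assumes free: "free_skew_field iota X Y" and "is_ncpoly p" and "p w \<noteq> 0"
  shows "eval_ncpoly iota X Y p \<noteq> 0"
proof -
  have full: "full_matrix 1 (\<lambda>i j. p)"
    using \<open>p w \<noteq> 0\<close> by (intro full_matrix_1) (auto dest: fun_cong)
  have inverting: "\<forall>n M. (\<forall>i<n. \<forall>j<n. is_ncpoly (M i j)) \<longrightarrow> full_matrix n M \<longrightarrow>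
      invertible_over n (\<lambda>i j. eval_ncpoly iota X Y (M i j))"
    using free unfolding free_skew_field_def by (elim conjE)
  have "invertible_over 1 (\<lambda>i j. eval_ncpoly iota X Y p)"
    using inverting[rule_format, of 1 "\<lambda>i j. p"] \<open>is_ncpoly p\<close> full by simp
  then obtain N where "eval_ncpoly iota X Y p * N 0 0 = 1"
    unfolding invertible_over_def by auto
  thus ?thesis by auto
qed

lemma free_skew_field_letter_nonzero:
  fixes iota :: "complex \<Rightarrow> 'a::division_ring"
  assumes free: "free_skew_field iota X Y"
  shows "(if b then Y else X) \<noteq> 0"
proof -
  interpret central_scalars iota using free by (rule free_skew_field_central_scalars)
  let ?p = "\<lambda>w. if w = [b] then (1::complex) else 0"
  have "eval_ncpoly iota X Y ?p = (\<Sum>w\<in>{[b]}. iota (?p w) * eval_word X Y w)"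
    by (rule eval_ncpoly_on_superset) (auto simp: iota_0)
  also have "\<dots> = (if b then Y else X)" by (simp add: iota_1 eval_word_def)
  finally show ?thesis
    using eval_ncpoly_nonzero[OF free, of ?p "[b]"] by (simp add: is_ncpoly_def)
qed

lemma free_skew_field_nonzero:
  assumes "free_skew_field iota X Y"
  shows "X \<noteq> 0" and "Y \<noteq> 0"
  using free_skew_field_letter_nonzero[OF assms, of False] free_skew_field_letter_nonzero[OF assms, of True]
  by simp_all

lemma free_skew_field_commutator_not_scalar:
  fixes iota :: "complex \<Rightarrow> 'a::division_ring"
  assumes free: "free_skew_field iota X Y"
  shows "X * Y * inverse X * inverse Y \<noteq> iota \<mu>"
proof
  interpret central_scalars iota using free by (rule free_skew_field_central_scalars)
  assume C: "X * Y * inverse X * inverse Y = iota \<mu>"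
  let ?p = "\<lambda>w. if w = [False, True] then (1::complex) else if w = [True, False] then - \<mu> else 0"
  have "finite {w. ?p w \<noteq> 0}"
    by (rule finite_subset[of _ "{[False, True], [True, False]}"]) auto
  hence "eval_ncpoly iota X Y ?p \<noteq> 0"
    by (intro eval_ncpoly_nonzero[OF free, of _ "[False, True]"]) (auto simp: is_ncpoly_def)
  moreover have "eval_ncpoly iota X Y ?p
      = (\<Sum>w\<in>{[False, True], [True, False]}. iota (?p w) * eval_word X Y w)"
    by (rule eval_ncpoly_on_superset) (auto simp: iota_0)
  moreover have "X * Y = iota \<mu> * (Y * X)"
    using free_skew_field_nonzero[OF free]
    by (simp flip: C add: mult.assoc inverse_mult_cancel_left)
  ultimately show False by (simp add: iota_1 iota_minus eval_word_def)
qed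

subsection \<open>One step of the recursion\<close>

definition T_invariant :: "'a::division_ring \<Rightarrow> 'a \<Rightarrow> 'a" where
  "T_invariant x u = (1 + x + u ^ 4) * inverse u * inverse x * inverse u + (1 + x) * inverse u ^ 2"

text \<open>Here \<open>a, b, p, a', b'\<close> stand for \<open>R(2k-1), R(2k), R(2k-2), R(2k+1), R(2k+2)\<close>.\<close>

lemma T_step_solve:
  fixes C a b a' b' :: "'a::division_ring"
  assumes a0: "a \<noteq> 0" and b0: "b \<noteq> 0" and exchange: "b * C * a = a * b"
    and odd: "a' * C * a = 1 + b ^ 4" and even: "b' * C * b = 1 + a'"
  defines "x \<equiv> inverse b * a * b"
  shows "a' = (1 + b ^ 4) * inverse x"
    and "b' = (1 + x + b ^ 4) * inverse b * inverse x"
proof -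
  have x0: "x \<noteq> 0" unfolding x_def using a0 b0 by simp
  have Ca: "C * a = x"
    using arg_cong[OF exchange, of "\<lambda>z. inverse b * z"] b0
    by (simp add: x_def mult.assoc inverse_mult_cancel_left)
  show a': "a' = (1 + b ^ 4) * inverse x"
    using arg_cong[OF odd, of "\<lambda>z. z * inverse x"] Ca x0 by (simp add: mult.assoc)
  have "inverse a * b = b * inverse x"
    unfolding x_def using a0 b0
    by (simp add: nonzero_inverse_mult_distrib mult.assoc mult_inverse_cancel_left)
  hence Cb: "C * b = x * b * inverse x"
    using Ca a0 by (metis mult.assoc right_inverse mult_1_right)
  have "b' * (x * b * inverse x) * (x * inverse b * inverse x) = (1 + a') * (x * inverse b * inverse x)"
    using even Cb by (simp add: mult.assoc)
  hence "b' = (1 + a') * (x * inverse b * inverse x)"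
    using x0 b0 by (simp add: mult.assoc mult_inverse_cancel_left inverse_mult_cancel_left)
  also have "\<dots> = (1 + x + b ^ 4) * inverse b * inverse x"
    unfolding a' using x0 by (simp add: algebra_simps inverse_mult_cancel_left)
  finally show "b' = (1 + x + b ^ 4) * inverse b * inverse x" .
qed

lemma T_step_invariant:
  fixes C a b p a' b' :: "'a::division_ring"
  assumes a0: "a \<noteq> 0" and b0: "b \<noteq> 0" and exchange: "b * C * a = a * b"
    and prev: "b * C * p = 1 + a" and odd: "a' * C * a = 1 + b ^ 4" and even: "b' * C * b = 1 + a'"
  shows "(b' + C * p) * inverse b = T_invariant (inverse b * a * b) b"
proof -
  have "C * p = inverse b + inverse b * a"
    using arg_cong[OF prev, of "\<lambda>z. inverse b * z"] b0
    by (simp add: mult.assoc inverse_mult_cancel_left algebra_simps)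
  also have "inverse b * a = (inverse b * a * b) * inverse b" using b0 by (simp add: mult.assoc)
  finally show ?thesis
    unfolding T_step_solve(2)[OF a0 b0 exchange odd even] T_invariant_def
    by (simp add: algebra_simps power2_eq_square)
qed

lemma T_invariant_step:
  fixes x u a' u' :: "'a::division_ring"
  assumes x0: "x \<noteq> 0" and u0: "u \<noteq> 0" and Q0: "1 + u ^ 4 \<noteq> 0" and P0: "1 + x + u ^ 4 \<noteq> 0"
    and a': "a' = (1 + u ^ 4) * inverse x" and u': "u' = (1 + x + u ^ 4) * inverse u * inverse x"
  shows "T_invariant (inverse u' * a' * u') u' = T_invariant x u"
proof -
  define Q where "Q = 1 + u ^ 4"
  define P where "P = 1 + x + u ^ 4"
  have PQ: "P = Q + x" unfolding P_def Q_def by (simp add: algebra_simps)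
  have P0': "P \<noteq> 0" and Q0': "Q \<noteq> 0" using P0 Q0 P_def Q_def by auto
  have u'0: "u' \<noteq> 0" unfolding u' using P0 x0 u0 by simp
  have a'0: "a' \<noteq> 0" unfolding a' using Q0 x0 by simp
  have iu': "inverse u' = x * u * inverse P"
    unfolding u' P_def using P0 x0 u0 by (simp add: nonzero_inverse_mult_distrib mult.assoc)
  have ia': "inverse a' = x * inverse Q"
    unfolding a' Q_def using Q0 x0 by (simp add: nonzero_inverse_mult_distrib mult.assoc)
  define x' where "x' = inverse u' * a' * u'"
  have ix': "inverse x' = inverse u' * inverse a' * u'"
    unfolding x'_def using a'0 u'0 by (simp add: nonzero_inverse_mult_distrib mult.assoc)
  have s1: "inverse u' * inverse x' * inverse u' = inverse u' * inverse u' * inverse a'"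
    unfolding ix' using u'0 by (simp add: mult.assoc mult_inverse_cancel_left)
  have s2: "1 + x' = inverse u' * (1 + a') * u'"
    unfolding x'_def using u'0 by (simp add: algebra_simps)
  have G1: "T_invariant x' u' = inverse u' * (1 + a') * inverse u' * inverse a' + u' * u' * inverse a'
              + inverse u' * (1 + a') * inverse u'"
  proof -
    have "T_invariant x' u' = (1 + x') * (inverse u' * inverse x' * inverse u')
            + u' ^ 4 * (inverse u' * inverse x' * inverse u') + (1 + x') * (inverse u' * inverse u')"
      unfolding T_invariant_def by (simp add: algebra_simps power2_eq_square)
    also have "\<dots> = inverse u' * (1 + a') * inverse u' * inverse a' + u' * u' * inverse a'
              + inverse u' * (1 + a') * inverse u'"
      unfolding s1 s2 using u'0
      by (simp add: mult.assoc mult_inverse_cancel_left inverse_mult_cancel_left numeral_eq_Suc)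
    finally show ?thesis .
  qed
  have a'p: "1 + a' = P * inverse x" unfolding a' Q_def[symmetric] PQ using x0 by (simp add: algebra_simps)
  have ia'p: "inverse a' + 1 = P * inverse Q" unfolding ia' PQ using Q0' by (simp add: algebra_simps)
  have t1: "inverse u' * (1 + a') * inverse u' = x * u * u * inverse P"
    unfolding iu' a'p using P0' x0 by (simp add: mult.assoc mult_inverse_cancel_left inverse_mult_cancel_left)
  have t2: "inverse u' * (1 + a') * inverse u' * inverse a' + inverse u' * (1 + a') * inverse u'
              = x * u * u * inverse Q"
  proof -
    have "inverse u' * (1 + a') * inverse u' * inverse a' + inverse u' * (1 + a') * inverse u'
           = (inverse u' * (1 + a') * inverse u') * (inverse a' + 1)" by (simp add: algebra_simps)
    also have "\<dots> = x * u * u * inverse Q"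
      unfolding t1 ia'p using P0' by (simp add: mult.assoc inverse_mult_cancel_left)
    finally show ?thesis .
  qed
  have QY: "Q * inverse u = inverse u * Q"
  proof -
    have "u * Q = Q * u" unfolding Q_def by (simp add: algebra_simps power_commutes)
    hence "inverse u * (u * Q) * inverse u = inverse u * (Q * u) * inverse u" by simp
    thus ?thesis using u0 by (simp add: mult.assoc inverse_mult_cancel_left)
  qed
  have QYQ: "Q * inverse u * inverse Q = inverse u"
    using Q0' by (simp add: QY mult.assoc)
  have t3: "u' * u' * inverse a' = P * inverse u * inverse x * inverse u + P * inverse u * inverse u * inverse Q"
  proof -
    have "u' * u' * inverse a' = P * inverse u * inverse x * (Q + x) * inverse u * inverse Q"
      unfolding u' P_def[symmetric] ia' PQ using x0 by (simp add: mult.assoc inverse_mult_cancel_left)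
    also have "\<dots> = P * inverse u * inverse x * (Q * inverse u * inverse Q)
                    + P * inverse u * (inverse x * x) * inverse u * inverse Q"
      by (simp add: algebra_simps)
    also have "\<dots> = P * inverse u * inverse x * inverse u + P * inverse u * inverse u * inverse Q"
      unfolding QYQ using x0 by simp
    finally show ?thesis .
  qed
  have u4: "u ^ 4 = u * u * u * u" by (simp add: numeral_eq_Suc mult.assoc)
  have t4: "x * u * u * inverse Q + P * inverse u * inverse u * inverse Q = (1 + x) * inverse u * inverse u"
  proof -
    have "x * u * u * inverse Q + P * inverse u * inverse u * inverse Q
         = x * (u * u + inverse u * inverse u) * inverse Q + Q * inverse u * inverse u * inverse Q"
      unfolding PQ by (simp add: algebra_simps)
    also have "u * u + inverse u * inverse u = inverse u * inverse u * Q"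
      unfolding Q_def u4 using u0 by (simp add: algebra_simps inverse_mult_cancel_left)
    also have "Q * inverse u * inverse u * inverse Q = inverse u * inverse u"
      by (metis QY QYQ mult.assoc)
    finally show ?thesis using Q0' by (simp add: algebra_simps mult.assoc)
  qed
  have "T_invariant x' u' = x * u * u * inverse Q + u' * u' * inverse a'"
    using G1 t2 by (simp add: algebra_simps)
  also have "\<dots> = P * inverse u * inverse x * inverse u + (1 + x) * inverse u * inverse u"
    unfolding t3 using t4 by (simp add: algebra_simps)
  also have "\<dots> = T_invariant x u" unfolding T_invariant_def P_def by (simp add: power2_eq_square mult.assoc)
  finally show ?thesis unfolding x'_def .
qed

subsection \<open>T-systems\<close>

lemma int_even_odd_cases:
  fixes j :: int
  obtains m where "j = 2*m" | m where "j = 2*m - 1"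
proof -
  have "j = 2 * (j div 2) \<or> j = 2 * ((j + 1) div 2) - 1" by presburger
  thus ?thesis using that by blast
qed

locale T_system =
  fixes C :: "'a::division_ring" and R :: "int \<Rightarrow> 'a"
  assumes rec_even: "\<And>n. R (2*n) * C * R (2*n - 2) = 1 + R (2*n - 1)"
    and rec_odd: "\<And>n. R (2*n + 1) * C * R (2*n - 1) = 1 + R (2*n) ^ 4"
begin

lemma rec_even_next: "R (2*n + 2) * C * R (2*n) = 1 + R (2*n + 1)"
  using rec_even[of "n + 1"] by (simp add: algebra_simps)

lemma rec_odd_prev: "R (2*n - 1) * C * R (2*n - 3) = 1 + R (2*n - 2) ^ 4"
  using rec_odd[of "n - 1"] by (simp add: algebra_simps)

lemma even_nonzero:
  assumes "C \<noteq> 1"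
  shows "R (2*n) \<noteq> 0"
proof
  assume zero: "R (2*n) = 0"
  have "R (2*n - 1) = -1" using rec_even[of n] zero by (simp add: add_eq_0_iff)
  moreover have "R (2*n + 1) = -1" using rec_even_next[of n] zero by (simp add: add_eq_0_iff)
  ultimately have "C = 1" using rec_odd[of n] zero by simp
  with assms show False ..
qed

text \<open>A zero at an odd index makes both neighbouring \<open>R\<close> fourth roots of \<open>-1\<close>, hence scalars,
  and then \<open>R(2n) C R(2n-2) = 1\<close> makes \<open>C\<close> a scalar.\<close>

lemma odd_nonzero:
  assumes "central_scalars iota" and not_scalar: "\<And>\<mu>. C \<noteq> iota \<mu>"
  shows "R (2*n - 1) \<noteq> 0"
proof
  interpret central_scalars iota by fact
  assume zero: "R (2*n - 1) = 0"
  have "R (2*n) ^ 4 = -1" using rec_odd[of n] zero by (simp add: add_eq_0_iff)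
  then obtain z1 where z1: "R (2*n) = iota z1" using scalar_if_power4_eq_minus_1 by blast
  have "R (2*n - 2) ^ 4 = -1" using rec_odd_prev[of n] zero by (simp add: add_eq_0_iff)
  then obtain z2 where z2: "R (2*n - 2) = iota z2" using scalar_if_power4_eq_minus_1 by blast
  have "iota (z1 * z2) * C = 1"
    using rec_even[of n] zero
    by (simp add: z1 z2 iota_mult mult.assoc iota_central[of z2 C] flip: iota_central[of z1])
  hence "C = inverse (iota (z1 * z2))" by (rule inverse_unique[symmetric])
  hence "C = iota (inverse (z1 * z2))" by (simp only: iota_inverse)
  with not_scalar show False by blast
qed

lemma nonzero_if_C_not_scalar:
  assumes "central_scalars iota" and "\<And>\<mu>. C \<noteq> iota \<mu>"
  shows "R j \<noteq> 0"
proof -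
  have "C \<noteq> 1" using assms central_scalars.iota_1 by metis
  thus ?thesis using even_nonzero odd_nonzero[OF assms] by (cases j rule: int_even_odd_cases) auto
qed

lemma commutes_with_middle: "R (j + 2) * C * R j * R (j + 1) = R (j + 1) * (R (j + 2) * C * R j)"
proof (cases j rule: int_even_odd_cases)
  case (1 m)
  thus ?thesis using rec_even_next[of m] by (simp add: algebra_simps)
next
  case (2 m)
  hence "2*m = j + 1" by simp
  hence "R (j + 2) * C * R j = 1 + R (j + 1) ^ 4" using rec_odd[of m] by (simp add: add.assoc)
  thus ?thesis by (simp add: algebra_simps power_commutes)
qed

end

locale regular_T_system = T_system +
  assumes C_nonzero: "C \<noteq> 0" and R_nonzero: "\<And>j. R j \<noteq> 0"
    and exchange_1: "R 2 * C * R 1 = R 1 * R 2"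
begin

lemma exchange:
  assumes "1 \<le> j"
  shows "R (j + 1) * C * R j = R j * R (j + 1)"
  using assms
proof (induction j rule: int_ge_induct)
  case base
  show ?case using exchange_1 by simp
next
  case (step j)
  have "(R (j + 2) * C * R (j + 1) - R (j + 1) * R (j + 2)) * (C * R j)
      = R (j + 2) * C * (R (j + 1) * C * R j) - R (j + 1) * (R (j + 2) * C * R j)"
    by (simp add: algebra_simps)
  also have "\<dots> = 0"
    using step.IH commutes_with_middle[of j] by (simp add: mult.assoc)
  finally show ?case
    using C_nonzero R_nonzero[of j] by (simp add: add.assoc)
qed

definition conj_odd :: "int \<Rightarrow> 'a" where
  "conj_odd k = inverse (R (2*k)) * R (2*k - 1) * R (2*k)"

lemma exchange_odd: "1 \<le> k \<Longrightarrow> R (2*k) * C * R (2*k - 1) = R (2*k - 1) * R (2*k)"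
  using exchange[of "2*k - 1"] by simp

lemma recurrence_quotient_eq_T_invariant:
  "1 \<le> k \<Longrightarrow>
    (R (2*k + 2) + C * R (2*k - 2)) * inverse (R (2*k)) = T_invariant (conj_odd k) (R (2*k))"
  unfolding conj_odd_def
  by (rule T_step_invariant[OF R_nonzero R_nonzero exchange_odd rec_even rec_odd rec_even_next])

lemma T_invariant_conj_odd_step:
  assumes "1 \<le> k"
  shows "T_invariant (conj_odd (k + 1)) (R (2*k + 2)) = T_invariant (conj_odd k) (R (2*k))"
proof -
  note solve = T_step_solve[OF R_nonzero R_nonzero exchange_odd[OF assms] rec_odd rec_even_next,
      folded conj_odd_def]
  have "conj_odd k \<noteq> 0" unfolding conj_odd_def using R_nonzero by simp
  moreover have "1 + R (2*k) ^ 4 \<noteq> 0"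
    using rec_odd[of k] R_nonzero C_nonzero by (metis no_zero_divisors)
  moreover have "1 + conj_odd k + R (2*k) ^ 4 \<noteq> 0"
    using solve(2) R_nonzero[of "2*k + 2"] by auto
  moreover have "conj_odd (k + 1) = inverse (R (2*k + 2)) * R (2*k + 1) * R (2*k + 2)"
    by (simp add: conj_odd_def algebra_simps)
  ultimately show ?thesis
    using T_invariant_step[OF _ R_nonzero _ _ solve] by simp
qed

lemma T_invariant_conserved:
  "1 \<le> k \<Longrightarrow> T_invariant (conj_odd k) (R (2*k)) = T_invariant (conj_odd 1) (R 2)"
proof (induction k rule: int_ge_induct)
  case (step k)
  thus ?case using T_invariant_conj_odd_step[of k] by simp
qed simp

lemma linear_recurrence:
  assumes "1 \<le> k"
  shows "R (2*k + 2) + C * R (2*k - 2) = T_invariant (conj_odd 1) (R 2) * R (2*k)"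
proof -
  have "(R (2*k + 2) + C * R (2*k - 2)) * inverse (R (2*k)) = T_invariant (conj_odd 1) (R 2)"
    using recurrence_quotient_eq_T_invariant[OF assms] T_invariant_conserved[OF assms] by simp
  hence "(R (2*k + 2) + C * R (2*k - 2)) * inverse (R (2*k)) * R (2*k)
      = T_invariant (conj_odd 1) (R 2) * R (2*k)"
    by simp
  thus ?thesis using R_nonzero[of "2*k"] by (simp add: mult.assoc)
qed

end

subsection \<open>The continued fraction\<close>

lemma T_invariant_eq_y1_plus_y3:
  fixes X Y :: "'a::division_ring"
  assumes "Y \<noteq> 0"
  shows "T_invariant X Y = (Y^3 + (1 + X) * inverse Y) * inverse X * inverse Y + (1 + X) * inverse Y ^ 2"
proof -
  have "Y^3 = Y^4 * inverse Y" using assms by (simp add: numeral_eq_Suc mult.assoc)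
  thus ?thesis unfolding T_invariant_def by (simp add: algebra_simps)
qed

lemma y2_minus_y3_y1:
  fixes X Y :: "'a::division_ring"
  assumes "Y \<noteq> 0"
  shows "(Y + (1 + X) * inverse Y ^ 2 * (1 + X) * inverse Y) * inverse X * inverse Y
         - (1 + X) * inverse Y ^ 2 * ((Y^3 + (1 + X) * inverse Y) * inverse X * inverse Y)
         = - (X * Y * inverse X * inverse Y)"
proof -
  have "inverse Y ^ 2 * Y^3 = Y"
    using assms by (simp add: numeral_eq_Suc mult.assoc inverse_mult_cancel_left)
  moreover have "(1 + X) * inverse Y ^ 2 * (Y^3 + (1 + X) * inverse Y)
      = (1 + X) * (inverse Y ^ 2 * Y^3) + (1 + X) * inverse Y ^ 2 * (1 + X) * inverse Y"
    by (simp add: algebra_simps)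
  ultimately have expand: "(1 + X) * inverse Y ^ 2 * (Y^3 + (1 + X) * inverse Y)
      = (1 + X) * Y + (1 + X) * inverse Y ^ 2 * (1 + X) * inverse Y"
    by simp
  have "(1 + X) * inverse Y ^ 2 * ((Y^3 + (1 + X) * inverse Y) * inverse X * inverse Y)
      = ((1 + X) * inverse Y ^ 2 * (Y^3 + (1 + X) * inverse Y)) * inverse X * inverse Y"
    by (simp only: mult.assoc)
  also have "\<dots> = ((1 + X) * Y + (1 + X) * inverse Y ^ 2 * (1 + X) * inverse Y) * inverse X * inverse Y"
    by (simp only: expand)
  finally show ?thesis by (simp add: algebra_simps)
qed

lemma free_skew_field_regular_T_system:
  fixes iota :: "complex \<Rightarrow> 'a::division_ring"
  assumes free: "free_skew_field iota X Y" and "T_system (X * Y * inverse X * inverse Y) R"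
    and R1: "R 1 = Y * X * inverse Y" and R2: "R 2 = Y"
  shows "regular_T_system (X * Y * inverse X * inverse Y) R"
proof -
  interpret T_system "X * Y * inverse X * inverse Y" R by fact
  have X0: "X \<noteq> 0" and Y0: "Y \<noteq> 0" using free_skew_field_nonzero[OF free] by auto
  note not_scalar = free_skew_field_commutator_not_scalar[OF free]
  note scalars = free_skew_field_central_scalars[OF free]
  show ?thesis
  proof
    show "X * Y * inverse X * inverse Y \<noteq> 0"
      using not_scalar[of 0] central_scalars.iota_0[OF scalars] by simp
    show "R j \<noteq> 0" for j by (rule nonzero_if_C_not_scalar[OF scalars not_scalar])
    show "R 2 * (X * Y * inverse X * inverse Y) * R 1 = R 1 * R 2"
      using X0 Y0 by (simp add: R1 R2 mult.assoc inverse_mult_cancel_left)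
  qed
qed

theorem theorem4p9:
  fixes iota :: "complex \<Rightarrow> 'a::division_ring" and X Y :: 'a and R :: "int \<Rightarrow> 'a"
  assumes free: "free_skew_field iota X Y"
    and rec_even: "\<And>n::int. R (2*n) * (X * Y * inverse X * inverse Y) * R (2*n - 2) = 1 + R (2*n - 1)"
    and rec_odd: "\<And>n::int. R (2*n + 1) * (X * Y * inverse X * inverse Y) * R (2*n - 1) = 1 + R (2*n) ^ 4"
    and R1: "R 1 = Y * X * inverse Y"
    and R2: "R 2 = Y"
  shows "let u = (\<lambda>n::int. R (2*n));
             y1 = (Y^3 + (1 + X) * inverse Y) * inverse X * inverse Y;
             y2 = (Y + (1 + X) * inverse Y ^ 2 * (1 + X) * inverse Y) * inverse X * inverse Y;
             y3 = (1 + X) * inverse Y ^ 2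
         in Abs_fps (\<lambda>n. u (int n + 1)) =
            inverse (1 - fps_X * fps_const y1
                       - fps_X ^ 2 * inverse (1 - fps_X * fps_const y3) * fps_const y2)
            * fps_const (u 1)"
proof -
  let ?C = "X * Y * inverse X * inverse Y"
  have "T_system ?C R" using rec_even rec_odd by unfold_locales
  then interpret regular_T_system ?C R
    by (rule free_skew_field_regular_T_system[OF free _ R1 R2])
  have Y0: "Y \<noteq> 0" using free_skew_field_nonzero[OF free] by auto
  define y1 where "y1 = (Y^3 + (1 + X) * inverse Y) * inverse X * inverse Y"
  define y2 where "y2 = (Y + (1 + X) * inverse Y ^ 2 * (1 + X) * inverse Y) * inverse X * inverse Y"
  define y3 where "y3 = (1 + X) * inverse Y ^ 2"
  have "conj_odd 1 = X" using Y0 by (simp add: conj_odd_def R1 R2 mult.assoc inverse_mult_cancel_left)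
  hence G: "T_invariant (conj_odd 1) (R 2) = y1 + y3"
    unfolding y1_def y3_def R2 using T_invariant_eq_y1_plus_y3[OF Y0] by simp
  have C: "y2 - y3 * y1 = - ?C" unfolding y1_def y2_def y3_def by (rule y2_minus_y3_y1[OF Y0])
  have "?C * R 0 = y3 * Y"
    using arg_cong[OF rec_even[of 1], of "\<lambda>z. inverse Y * z"] Y0
    by (simp add: y3_def R1 R2 power2_eq_square algebra_simps mult.assoc inverse_mult_cancel_left)
  hence "R (2 * (int 1 + 1)) = y1 * R (2 * (int 0 + 1))"
    using linear_recurrence[of 1] G by (simp add: R2 algebra_simps)
  moreover have "R (2 * (int (n + 2) + 1))
      = (y1 + y3) * R (2 * (int (n + 1) + 1)) + (y2 - y3 * y1) * R (2 * (int n + 1))" for n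
    unfolding C using linear_recurrence[of "int n + 2"] G by (simp add: algebra_simps)
  ultimately show ?thesis
    unfolding Let_def y1_def[symmetric] y2_def[symmetric] unfolding y3_def[symmetric]
    using Abs_fps_second_order_recurrence[of "\<lambda>n. R (2 * (int n + 1))" y1 y3 y2] by simp
qed

end
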